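(* Let $p$ be a prime and let $\Phi_p$ be the set of all $F$-pure thresholds $\operatorname{fpt}(R,f)$, where $R$ ranges over all $F$-pure rings of characteristic $p$ and $f$ ranges over all non-zero non-units of $R$. Then for every integer $e\ge 1$ and every $\beta\in[0,1]\cap \frac{1}{p^e}\mathbb{N}$, we have \[ \Phi_p \cap \left(\beta, \tfrac{p^e}{p^e-1}\beta\right)=\emptyset. \]
   Context: A ring $R$ of characteristic $p$ is $F$-pure if the inclusion $R \subseteq R^{1/p}$ splits as a map of $R$-modules; such a ring is reduced. Roots. $R^{1/p^e}$ is the ring of formal $p^e$-th roots $r^{1/p^e}$ of elements $r\in R$. Its operations are $r^{1/p^e}+s^{1/p^e}=(r+s)^{1/p^e}$ and $r^{1/p^e}s^{1/p^e}=(rs)^{1/p^e}$. It contains $R$ via $r\mapsto (r^{p^e})^{1/p^e}$. Powers of $f$. For $a \in\mathbb{N}$, $f^{a/p^e}:=(f^a)^{1/p^e}$. Splitting. For $t\in R^{1/p^e}$, the inclusion $R\cdot t\subseteq R^{1/p^e}$ splits if there is an $R$-linear $\theta:R^{1/p^e}\to R$ with $\theta(t)=1$. Pairs. For $\lambda\ge0$, the pair $(R,f^\lambda)$ is $F$-pure if $R\cdot f^{\lfloor (p^e-1)\lambda\rfloor/p^e}\subseteq R^{1/p^e}$ splits for all $e\geq1$. $F$-pure threshold. $\operatorname{fpt}(R,f)$ is the supremum of all $\lambda\ge0$ with $(R,f^\lambda)$ $F$-pure. *)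

theory Defs
  imports Complex_Main "HOL-Computational_Algebra.Primes"
begin

text \<open>We identify R^(1/p^e) with R itself: the formal root r^(1/p^e) corresponds to r.
  Addition and multiplication are then those of R, and the structure map
  R \<rightarrow> R^(1/p^e) is r \<mapsto> r^(p^e). So an R-linear map R^(1/p^e) \<rightarrow> R is an
  additive map theta : R \<rightarrow> R with theta (r^(p^e) * x) = r * theta x.\<close>

definition root_split :: "nat \<Rightarrow> nat \<Rightarrow> 'a::comm_ring_1 \<Rightarrow> bool" where
  "root_split p e t \<longleftrightarrow>
     (\<exists>\<theta>::'a \<Rightarrow> 'a. (\<forall>x y. \<theta> (x + y) = \<theta> x + \<theta> y)
                 \<and> (\<forall>r x. \<theta> (r ^ (p ^ e) * x) = r * \<theta> x)
                 \<and> \<theta> t = 1)"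

definition F_pure_ring :: "nat \<Rightarrow> 'a::comm_ring_1 itself \<Rightarrow> bool" where
  "F_pure_ring p R \<longleftrightarrow> root_split p 1 (1::'a)"

definition F_pure_pair :: "nat \<Rightarrow> 'a::comm_ring_1 \<Rightarrow> real \<Rightarrow> bool" where
  "F_pure_pair p f lam \<longleftrightarrow>
     (\<forall>e::nat. e \<ge> 1 \<longrightarrow> root_split p e (f ^ nat \<lfloor>(real p ^ e - 1) * lam\<rfloor>))"

definition fpt :: "nat \<Rightarrow> 'a::comm_ring_1 \<Rightarrow> real" where
  "fpt p f = Sup {lam. lam \<ge> 0 \<and> F_pure_pair p f lam}"

end

theory Submission
  imports Defs
begin

text \<open>Write q = p^e. A splitting of f^(a/p^E) can be pushed down, via the Frobenius, to a
  splitting of f^(a'/p^E') whenever a'/p^E' \<le> a/p^E; and a splitting of f^(n/q) composed with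
  itself k times splits f^(n(1 + q + ... + q^(k-1))/q^k). If \<beta> = n/q < fpt(f), pick an
  F-pure \<lambda> > \<beta>; for large k the exponent \<lfloor>(q^k - 1)\<lambda>\<rfloor>/q^k exceeds n/q, so f^(n/q) splits.
  Iterating that splitting and pushing down shows that (R, f^\<mu>) is F-pure for
  \<mu> = n/(q - 1) = q\<beta>/(q - 1), hence fpt(f) \<ge> q\<beta>/(q - 1).\<close>

lemma root_split_descend:
  fixes f :: "'a::comm_ring_1"
  assumes "prime p" "CHAR('a) = p"
    and "root_split p E (f ^ a)" "E' \<le> E" "p ^ (E - E') * a' \<le> a"
  shows "root_split p E' (f ^ a')"
proof -
  obtain \<theta> :: "'a \<Rightarrow> 'a" where add: "\<forall>x y. \<theta> (x + y) = \<theta> x + \<theta> y"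
    and lin: "\<forall>r x. \<theta> (r ^ (p ^ E) * x) = r * \<theta> x" and one: "\<theta> (f ^ a) = 1"
    using assms(3) unfolding root_split_def by blast
  define d where "d = E - E'"
  define u where "u = f ^ (a - p ^ d * a')"
  define \<psi> where "\<psi> x = \<theta> (x ^ (p ^ d) * u)" for x
  have pE: "p ^ E = p ^ E' * p ^ d"
    using assms(4) by (simp add: d_def flip: power_add)
  have "\<psi> (x + y) = \<psi> x + \<psi> y" for x y
    using assms(1,2) by (simp add: \<psi>_def freshmans_dream' distrib_right add)
  moreover have "\<psi> (r ^ (p ^ E') * x) = r * \<psi> x" for r x
  proof -
    have "(r ^ (p ^ E') * x) ^ (p ^ d) * u = r ^ (p ^ E) * (x ^ (p ^ d) * u)"
      by (simp add: pE power_mult_distrib power_mult)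
    thus ?thesis by (simp add: \<psi>_def lin)
  qed
  moreover have "(f ^ a') ^ (p ^ d) * u = f ^ a"
    using assms(5) by (simp add: u_def d_def mult.commute flip: power_mult power_add)
  hence "\<psi> (f ^ a') = 1" by (simp add: \<psi>_def one)
  ultimately show ?thesis unfolding root_split_def by blast
qed

lemma root_split_iterate:
  fixes f :: "'a::comm_ring_1"
  assumes "root_split p e (f ^ n)"
  shows "root_split p (k * e) (f ^ (n * (\<Sum>i<k. (p ^ e) ^ i)))"
proof (induction k)
  case 0
  show ?case unfolding root_split_def by (rule exI[of _ id]) simp
next
  case (Suc k)
  obtain \<theta> :: "'a \<Rightarrow> 'a" where add: "\<forall>x y. \<theta> (x + y) = \<theta> x + \<theta> y"
    and lin: "\<forall>r x. \<theta> (r ^ (p ^ e) * x) = r * \<theta> x" and one: "\<theta> (f ^ n) = 1"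
    using assms unfolding root_split_def by blast
  define s where "s = (\<Sum>i<k. (p ^ e) ^ i)"
  obtain T :: "'a \<Rightarrow> 'a" where T_add: "\<forall>x y. T (x + y) = T x + T y"
    and T_lin: "\<forall>r x. T (r ^ (p ^ (k * e)) * x) = r * T x" and T_one: "T (f ^ (n * s)) = 1"
    using Suc.IH unfolding root_split_def s_def by blast
  have "T (\<theta> (r ^ (p ^ (Suc k * e)) * x)) = r * T (\<theta> x)" for r x
  proof -
    have "r ^ (p ^ (Suc k * e)) = (r ^ (p ^ (k * e))) ^ (p ^ e)"
      by (simp add: mult.commute power_add flip: power_mult)
    thus ?thesis by (simp add: lin T_lin)
  qed
  moreover have "(\<Sum>i<Suc k. (p ^ e) ^ i) = 1 + p ^ e * s"
    unfolding s_def by (subst sum.lessThan_Suc_shift) (simp add: sum_distrib_left)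
  hence "f ^ (n * (\<Sum>i<Suc k. (p ^ e) ^ i)) = (f ^ (n * s)) ^ (p ^ e) * f ^ n"
    by (simp add: algebra_simps power_add flip: power_mult)
  hence "T (\<theta> (f ^ (n * (\<Sum>i<Suc k. (p ^ e) ^ i)))) = 1"
    by (simp add: lin one T_one)
  ultimately show ?case
    unfolding root_split_def using add T_add by (intro exI[of _ "\<lambda>x. T (\<theta> x)"]) simp
qed

lemma root_split_power_imp_unit:
  fixes f :: "'a::comm_ring_1"
  assumes "root_split p e (f ^ a)" "p ^ e \<le> a"
  shows "f dvd 1"
proof -
  obtain \<theta> :: "'a \<Rightarrow> 'a" where lin: "\<forall>r x. \<theta> (r ^ (p ^ e) * x) = r * \<theta> x"
    and one: "\<theta> (f ^ a) = 1"
    using assms(1) unfolding root_split_def by blast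
  have "f ^ a = f ^ (p ^ e) * f ^ (a - p ^ e)"
    using assms(2) by (simp flip: power_add)
  hence "1 = f * \<theta> (f ^ (a - p ^ e))" using one lin by simp
  thus ?thesis by (rule dvdI)
qed

lemma F_pure_ring_imp_F_pure_pair_zero:
  fixes f :: "'a::comm_ring_1"
  assumes "F_pure_ring p TYPE('a)"
  shows "F_pure_pair p f 0"
proof -
  have "root_split p e (1::'a)" for e
    using root_split_iterate[of p 1 "1::'a" 0 e] assms by (simp add: F_pure_ring_def)
  thus ?thesis by (simp add: F_pure_pair_def)
qed

lemma F_pure_pair_less:
  fixes f :: "'a::comm_ring_1"
  assumes "F_pure_pair p f lam" "\<not> f dvd 1"
  shows "(real p - 1) * lam < real p"
proof (rule ccontr)
  assume "\<not> ?thesis"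
  hence "p ^ 1 \<le> nat \<lfloor>(real p ^ 1 - 1) * lam\<rfloor>"
    by (simp add: le_nat_floor)
  moreover have "root_split p 1 (f ^ nat \<lfloor>(real p ^ 1 - 1) * lam\<rfloor>)"
    using assms(1) unfolding F_pure_pair_def by (metis order_refl)
  ultimately show False
    using root_split_power_imp_unit assms(2) by blast
qed

lemma bdd_above_F_pure_thresholds:
  fixes f :: "'a::comm_ring_1"
  assumes "p \<ge> 2" "\<not> f dvd 1"
  shows "bdd_above {lam. lam \<ge> 0 \<and> F_pure_pair p f lam}"
proof (rule bdd_aboveI)
  fix lam assume "lam \<in> {lam. lam \<ge> 0 \<and> F_pure_pair p f lam}"
  hence "lam \<ge> 0" "(real p - 1) * lam < real p"
    using F_pure_pair_less assms(2) by auto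
  moreover have "lam \<le> (real p - 1) * lam"
    using \<open>lam \<ge> 0\<close> assms(1) by (simp add: mult_le_cancel_right1)
  ultimately show "lam \<le> real p" by linarith
qed

lemma root_split_below_F_pure_pair:
  fixes f :: "'a::comm_ring_1"
  assumes "prime p" "CHAR('a) = p" "e \<ge> 1"
    and "F_pure_pair p f lam" "real n / real p ^ e < lam"
  shows "root_split p e (f ^ n)"
proof -
  define q where "q = real p ^ e"
  have "q > 1"
    using assms(1,3) prime_gt_1_nat unfolding q_def by (simp add: one_less_power)
  define \<delta> where "\<delta> = lam - real n / q"
  have "\<delta> > 0" using assms(5) by (simp add: \<delta>_def q_def)
  obtain k where "lam / \<delta> < q ^ k"
    using real_arch_pow[OF \<open>q > 1\<close>] by blast
  hence "lam < q ^ k * \<delta>"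
    using \<open>\<delta> > 0\<close> by (simp add: pos_divide_less_eq)
  also have "\<dots> \<le> q ^ Suc k * \<delta>"
    using \<open>\<delta> > 0\<close> \<open>q > 1\<close> by (intro mult_right_mono power_increasing) auto
  finally have "q ^ k * real n \<le> (q ^ Suc k - 1) * lam"
    using \<open>q > 1\<close> by (simp add: \<delta>_def algebra_simps)
  hence "p ^ (k * e) * n \<le> nat \<lfloor>(real p ^ (Suc k * e) - 1) * lam\<rfloor>"
    by (intro le_nat_floor) (metis q_def of_nat_mult of_nat_power power_mult mult.commute)
  moreover have "root_split p (Suc k * e) (f ^ nat \<lfloor>(real p ^ (Suc k * e) - 1) * lam\<rfloor>)"
    using assms(3,4) by (simp add: F_pure_pair_def)
  ultimately show ?thesis
    using root_split_descend[OF assms(1,2)] by simp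
qed

lemma F_pure_pair_of_root_split:
  fixes f :: "'a::comm_ring_1"
  assumes "prime p" "CHAR('a) = p" "e \<ge> 1" "root_split p e (f ^ n)"
  shows "F_pure_pair p f (real n / (real p ^ e - 1))"
  unfolding F_pure_pair_def
proof (intro allI impI)
  fix e' :: nat assume "e' \<ge> 1"
  define q where "q = real p ^ e"
  define \<mu> where "\<mu> = real n / (q - 1)"
  define s where "s = (\<Sum>i<e'. (p ^ e) ^ i)"
  define d where "d = e' * e - e'"
  have "q > 1"
    using assms(1,3) prime_gt_1_nat unfolding q_def by (simp add: one_less_power)
  have "\<mu> \<ge> 0" using \<open>q > 1\<close> by (simp add: \<mu>_def)
  have "e' \<le> e' * e" using assms(3) by simp
  have geo: "real s * (q - 1) = q ^ e' - 1"
    by (simp add: s_def q_def power_diff_1_eq mult.commute)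
  have ns: "real (n * s) = (q ^ e' - 1) * \<mu>"
    unfolding \<mu>_def geo[symmetric] using \<open>q > 1\<close> by simp
  have pd: "real p ^ d * real p ^ e' = q ^ e'"
    using \<open>e' \<le> e' * e\<close> by (simp add: d_def q_def mult.commute power_mult flip: power_add)
  have "real p ^ d \<ge> 1" "real p ^ e' \<ge> 1"
    using prime_gt_1_nat[OF assms(1)] by (simp_all add: one_le_power)
  hence "real (nat \<lfloor>(real p ^ e' - 1) * \<mu>\<rfloor>) \<le> (real p ^ e' - 1) * \<mu>"
    using \<open>\<mu> \<ge> 0\<close> by simp
  hence "real (p ^ d * nat \<lfloor>(real p ^ e' - 1) * \<mu>\<rfloor>) \<le> real p ^ d * ((real p ^ e' - 1) * \<mu>)"
    by (simp add: mult_left_mono)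
  also have "\<dots> = (q ^ e' - real p ^ d) * \<mu>"
    using pd by (simp add: algebra_simps)
  also have "\<dots> \<le> real (n * s)"
    unfolding ns using \<open>real p ^ d \<ge> 1\<close> \<open>\<mu> \<ge> 0\<close> by (intro mult_right_mono) auto
  finally have "p ^ d * nat \<lfloor>(real p ^ e' - 1) * \<mu>\<rfloor> \<le> n * s"
    by (simp only: of_nat_le_iff)
  moreover have "root_split p (e' * e) (f ^ (n * s))"
    using root_split_iterate[OF assms(4)] by (simp add: s_def)
  ultimately show "root_split p e' (f ^ nat \<lfloor>(real p ^ e' - 1) * (real n / (real p ^ e - 1))\<rfloor>)"
    using root_split_descend[OF assms(1,2) _ \<open>e' \<le> e' * e\<close>] by (simp add: d_def \<mu>_def q_def)
qed

theorem mainTheorem2: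
  fixes p e :: nat and \<beta> :: real and f :: "'a::comm_ring_1"
  assumes "prime p"
    and "CHAR('a) = p"
    and "F_pure_ring p TYPE('a)"
    and "f \<noteq> 0" and "\<not> f dvd 1"
    and "e \<ge> 1"
    and "0 \<le> \<beta>" and "\<beta> \<le> 1" and "\<exists>n::nat. \<beta> = real n / real p ^ e"
  shows "\<not> (\<beta> < fpt p f \<and> fpt p f < (real p ^ e / (real p ^ e - 1)) * \<beta>)"
proof
  assume H: "\<beta> < fpt p f \<and> fpt p f < (real p ^ e / (real p ^ e - 1)) * \<beta>"
  define S where "S = {lam. lam \<ge> 0 \<and> F_pure_pair p f lam}"
  obtain n :: nat where n: "\<beta> = real n / real p ^ e" using assms(9) by blast
  have "real p ^ e > 1"
    using assms(1,6) prime_gt_1_nat by (simp add: one_less_power)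
  have "0 \<in> S" using F_pure_ring_imp_F_pure_pair_zero[OF assms(3)] by (simp add: S_def)
  have bdd: "bdd_above S"
    unfolding S_def using bdd_above_F_pure_thresholds prime_ge_2_nat[OF assms(1)] assms(5) .
  obtain lam where "lam \<in> S" "\<beta> < lam"
    using H less_cSup_iff[OF _ bdd] \<open>0 \<in> S\<close> by (auto simp: fpt_def S_def)
  hence "root_split p e (f ^ n)"
    using root_split_below_F_pure_pair[OF assms(1,2,6)] n by (auto simp: S_def)
  hence "real n / (real p ^ e - 1) \<in> S"
    using F_pure_pair_of_root_split[OF assms(1,2,6)] \<open>real p ^ e > 1\<close> by (simp add: S_def)
  hence "real n / (real p ^ e - 1) \<le> fpt p f"
    using bdd by (simp add: fpt_def S_def cSup_upper)
  moreover have "(real p ^ e / (real p ^ e - 1)) * \<beta> = real n / (real p ^ e - 1)"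
    using n assms(1) prime_gt_0_nat by simp
  ultimately show False using H by simp
qed

end
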